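(* Let $\mathcal H_A,\mathcal H_B$ be finite-dimensional complex Hilbert spaces and let $\rho$ be a separable density matrix on $\mathcal H_A\otimes\mathcal H_B$. Let $\rho^{T_B}=(\mathbf 1_A\otimes T)\rho$ be its partial transpose, where $T$ is transposition in a chosen basis of $\mathcal H_B$. If $\mathcal R(\rho)\neq\mathcal R(\rho^{T_B})$, then either $\mathcal L_{\mathcal E}(\rho)>\mathcal R(\rho)$ or $\mathcal L_{\mathcal E}(\rho^{T_B})>\mathcal R(\rho^{T_B})$.
   Context: A density matrix is a positive semidefinite operator of trace one. $\rho$ is separable if it can be written as $\rho=\sum_i p_i\,|\psi_i\rangle\langle\psi_i|\otimes|\phi_i\rangle\langle\phi_i|$ with $p_i>0$ and unit vectors $\psi_i\in\mathcal H_A,\phi_i\in\mathcal H_B$ (a separable decomposition). $\mathcal R(\rho)$ denotes the rank of $\rho$. For a separable $\rho$, the optimal ensemble cardinality $\mathcal L_{\mathcal E}(\rho)$ is the least number $k$ of distinct pure product states $|\psi_i\rangle|\phi_i\rangle$ needed in a separable decomposition of $\rho$. (For separable $\rho$, $\rho^{T_B}$ is again a separable density matrix.) *)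

theory Defs
  imports "HOL-Analysis.Analysis"
begin

text \<open>Bipartite system H_A (x) H_B with H_A = C^'a, H_B = C^'b (finite index types);
  operators on H_A (x) H_B are matrices indexed by 'a \<times> 'b.\<close>

type_synonym ('a, 'b) bop = "complex ^ ('a \<times> 'b) ^ ('a \<times> 'b)"

definition psd :: "complex ^ 'n ^ 'n \<Rightarrow> bool" where
  "psd M \<longleftrightarrow> (\<forall>i j. M $ i $ j = cnj (M $ j $ i)) \<and>
     (\<forall>v :: complex ^ 'n. let q = (\<Sum>i\<in>UNIV. \<Sum>j\<in>UNIV. cnj (v $ i) * M $ i $ j * v $ j)
                           in Im q = 0 \<and> Re q \<ge> 0)"

definition mtrace :: "complex ^ 'n ^ 'n \<Rightarrow> complex" where
  "mtrace M = (\<Sum>i\<in>UNIV. M $ i $ i)"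

definition density_matrix :: "complex ^ 'n ^ 'n \<Rightarrow> bool" where
  "density_matrix M \<longleftrightarrow> psd M \<and> mtrace M = 1"

definition prod_proj :: "complex ^ 'a \<Rightarrow> complex ^ 'b \<Rightarrow> ('a, 'b) bop" where
  "prod_proj psi phi = (\<chi> r. \<chi> c.
      psi $ fst r * cnj (psi $ fst c) * phi $ snd r * cnj (phi $ snd c))"

definition pure_product_state :: "('a::finite, 'b::finite) bop \<Rightarrow> bool" where
  "pure_product_state M \<longleftrightarrow>
     (\<exists>psi phi. norm psi = 1 \<and> norm phi = 1 \<and> M = prod_proj psi phi)"

definition sep_decomp :: "('a::finite, 'b::finite) bop \<Rightarrow> ('a, 'b) bop set \<Rightarrow> (('a, 'b) bop \<Rightarrow> real) \<Rightarrow> bool" where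
  "sep_decomp rho P p \<longleftrightarrow> finite P \<and> (\<forall>M\<in>P. pure_product_state M \<and> p M > 0) \<and>
     (\<forall>r c. rho $ r $ c = (\<Sum>M\<in>P. complex_of_real (p M) * M $ r $ c))"

definition separable :: "('a::finite, 'b::finite) bop \<Rightarrow> bool" where
  "separable rho \<longleftrightarrow> (\<exists>P p. sep_decomp rho P p)"

definition ens_card :: "('a::finite, 'b::finite) bop \<Rightarrow> nat" where
  "ens_card rho = (LEAST k. \<exists>P p. sep_decomp rho P p \<and> card P = k)"

text \<open>Partial transpose on the second factor (transposition in the standard basis of C^'b).\<close>
definition partial_transpose :: "('a::finite, 'b::finite) bop \<Rightarrow> ('a, 'b) bop" where
  "partial_transpose rho = (\<chi> r. \<chi> c. rho $ (fst r, snd c) $ (fst c, snd r))"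

end

theory Submission
  imports Defs
begin

(* Partial transposition maps the product state psi (x) phi to psi (x) conj phi, so it carries
   separable decompositions of rho bijectively onto those of rho^T_B and L_E(rho) = L_E(rho^T_B).
   A decomposition into k product states writes rho as a sum of k rank-one matrices, so R <= L_E
   for rho and for rho^T_B. If neither inequality of the theorem were strict, we would get
   R(rho) = L_E(rho) = L_E(rho^T_B) = R(rho^T_B). *)

lemma rank_sum_rank_one_le_card:
  fixes a :: "'i \<Rightarrow> 'm::finite \<Rightarrow> 'a::field" and y :: "'i \<Rightarrow> 'a ^ 'n::finite"
  assumes "finite I"
  shows "rank ((\<chi> r c. \<Sum>i\<in>I. a i r * y i $ c) :: 'a ^ 'n ^ 'm) \<le> card I"
proof -
  let ?A = "(\<chi> r c. \<Sum>i\<in>I. a i r * y i $ c) :: 'a ^ 'n ^ 'm"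
  have row_A: "row r ?A = (\<Sum>i\<in>I. a i r *s y i)" for r
    by (simp add: row_def vec_eq_iff)
  have "row r ?A \<in> vec.span (y ` I)" for r
    unfolding row_A by (intro vec.span_sum vec.span_scale vec.span_base) auto
  then have "rows ?A \<subseteq> vec.span (y ` I)"
    unfolding rows_def by blast
  then have "vec.dim (rows ?A) \<le> card (y ` I)"
    using assms by (intro vec.dim_le_card) auto
  also have "\<dots> \<le> card I"
    using assms by (rule card_image_le)
  finally show ?thesis
    by (simp add: row_rank_def_gen)
qed

lemma rank_le_card_sep_decomp:
  assumes "sep_decomp rho P p"
  shows "rank rho \<le> card P"
proof -
  have fin: "finite P" and pure: "\<forall>M\<in>P. pure_product_state M"
    and rho: "\<And>r c. rho $ r $ c = (\<Sum>M\<in>P. complex_of_real (p M) * M $ r $ c)"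
    using assms unfolding sep_decomp_def by auto
  obtain psi phi where "\<forall>M\<in>P. M = prod_proj (psi M) (phi M)"
  proof -
    have "\<forall>M\<in>P. \<exists>pp. M = prod_proj (fst pp) (snd pp)"
      using pure unfolding pure_product_state_def by fastforce
    then obtain pp where "\<forall>M\<in>P. M = prod_proj (fst (pp M)) (snd (pp M))"
      by metis
    then show ?thesis
      using that[of "fst \<circ> pp" "snd \<circ> pp"] by simp
  qed
  then have M: "M $ r $ c = psi M $ fst r * cnj (psi M $ fst c) * phi M $ snd r * cnj (phi M $ snd c)"
    if "M \<in> P" for M r c
  proof -
    have "M = prod_proj (psi M) (phi M)"
      using that \<open>\<forall>M\<in>P. M = prod_proj (psi M) (phi M)\<close> by blast
    then have "M $ r $ c = prod_proj (psi M) (phi M) $ r $ c"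
      by (rule arg_cong[where f = "\<lambda>X. X $ r $ c"])
    then show ?thesis
      by (simp add: prod_proj_def)
  qed
  have "rho = (\<chi> r c. \<Sum>M\<in>P. (complex_of_real (p M) * (psi M $ fst r * phi M $ snd r)) *
                 (\<chi> c. cnj (psi M $ fst c * phi M $ snd c)) $ c)"
    unfolding vec_eq_iff rho
    by (auto intro!: sum.cong simp: M)
  then show ?thesis
    by (simp only:) (rule rank_sum_rank_one_le_card[OF fin])
qed

lemma partial_transpose_partial_transpose [simp]:
  "partial_transpose (partial_transpose M) = M"
  by (simp add: partial_transpose_def vec_eq_iff)

lemma inj_partial_transpose: "inj partial_transpose"
  by (metis injI partial_transpose_partial_transpose)

lemma partial_transpose_prod_proj:
  "partial_transpose (prod_proj psi phi) = prod_proj psi (\<chi> j. cnj (phi $ j))"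
  by (simp add: partial_transpose_def prod_proj_def vec_eq_iff)

lemma pure_product_state_partial_transpose:
  assumes "pure_product_state M"
  shows "pure_product_state (partial_transpose M)"
proof -
  obtain psi phi where "norm psi = 1" "norm phi = 1" "M = prod_proj psi phi"
    using assms unfolding pure_product_state_def by blast
  moreover have "norm (\<chi> j. cnj (phi $ j)) = norm phi"
    by (simp add: norm_vec_def)
  ultimately show ?thesis
    unfolding pure_product_state_def by (metis partial_transpose_prod_proj)
qed

lemma sep_decomp_partial_transpose:
  assumes "sep_decomp rho P p"
  shows "sep_decomp (partial_transpose rho) (partial_transpose ` P) (p \<circ> partial_transpose)"
proof -
  have fin: "finite P" and P: "\<forall>M\<in>P. pure_product_state M \<and> p M > 0"
    and rho: "\<And>r c. rho $ r $ c = (\<Sum>M\<in>P. complex_of_real (p M) * M $ r $ c)"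
    using assms unfolding sep_decomp_def by auto
  have "(\<Sum>N\<in>partial_transpose ` P. complex_of_real ((p \<circ> partial_transpose) N) * N $ r $ c)
      = (\<Sum>M\<in>P. complex_of_real (p M) * partial_transpose M $ r $ c)" for r c
    by (subst sum.reindex) (auto intro: inj_on_subset[OF inj_partial_transpose])
  also have "\<dots> r c = partial_transpose rho $ r $ c" for r c
    by (simp add: partial_transpose_def rho)
  finally show ?thesis
    using fin P by (auto simp: sep_decomp_def intro: pure_product_state_partial_transpose)
qed

lemma separable_partial_transpose:
  "separable rho \<Longrightarrow> separable (partial_transpose rho)"
  unfolding separable_def using sep_decomp_partial_transpose by blast

lemma ens_card_le_card_sep_decomp: "sep_decomp rho P p \<Longrightarrow> ens_card rho \<le> card P"
  unfolding ens_card_def by (rule Least_le) blast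

lemma sep_decomp_ens_card:
  assumes "separable rho"
  obtains P p where "sep_decomp rho P p" and "card P = ens_card rho"
proof -
  have "\<exists>k P p. sep_decomp rho P p \<and> card P = k"
    using assms unfolding separable_def by blast
  from LeastI_ex[OF this] show ?thesis
    using that unfolding ens_card_def by blast
qed

lemma rank_le_ens_card: "separable rho \<Longrightarrow> rank rho \<le> ens_card rho"
  by (metis sep_decomp_ens_card rank_le_card_sep_decomp)

lemma ens_card_partial_transpose_le:
  assumes "separable rho"
  shows "ens_card (partial_transpose rho) \<le> ens_card rho"
proof -
  obtain P p where "sep_decomp rho P p" and "card P = ens_card rho"
    using assms by (rule sep_decomp_ens_card)
  moreover have "card (partial_transpose ` P) = card P"
    by (rule card_image) (rule inj_on_subset[OF inj_partial_transpose], simp)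
  ultimately show ?thesis
    by (metis ens_card_le_card_sep_decomp sep_decomp_partial_transpose)
qed

lemma ens_card_partial_transpose:
  assumes "separable rho"
  shows "ens_card (partial_transpose rho) = ens_card rho"
  using ens_card_partial_transpose_le[OF assms]
    ens_card_partial_transpose_le[OF separable_partial_transpose[OF assms]]
  by simp

theorem theorem1:
  fixes rho :: "complex ^ ('a::finite \<times> 'b::finite) ^ ('a \<times> 'b)"
  assumes "density_matrix rho"
    and "separable rho"
    and "rank rho \<noteq> rank (partial_transpose rho)"
  shows "ens_card rho > rank rho \<or>
         ens_card (partial_transpose rho) > rank (partial_transpose rho)"
  using rank_le_ens_card[OF assms(2)]
    rank_le_ens_card[OF separable_partial_transpose[OF assms(2)]]
    ens_card_partial_transpose[OF assms(2)] assms(3)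
  by linarith

end
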